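(* Let $K\ge 1$ be an integer, $\mathcal{I}=\{1,\dots,K\}$, and let $\lambda_i>0$, $\gamma_{ui}>0$, $\gamma_{di}>0$, $\widetilde{\gamma}_{ui}>0$, $\widetilde{\gamma}_{di}>0$ ($i\in\mathcal{I}$) be given, together with asset proportions $m_i>0$ ($i\in\mathcal{I}$) satisfying $\sum_{i\in\mathcal{I}}m_i<1$. Let $E=\{(l,n)\}\cup\{(hi,n),(hi,o),(li,o): i\in\mathcal{I}\}$. Then there exists a unique function $\mu:E\to[0,\infty)$ (a steady state of the partially segmented market) satisfying, for all $i\in\mathcal{I}$, \[0=-\lambda_i\mu(hi,n)\mu(li,o)+\widetilde{\gamma}_{ui}\mu(l,n)-\widetilde{\gamma}_{di}\mu(hi,n),\] \[0=-\lambda_i\mu(hi,n)\mu(li,o)-\gamma_{ui}\mu(li,o)+\gamma_{di}\mu(hi,o),\] together with the constraints \[\mu(hi,o)+\mu(li,o)=m_i\ \ (i\in\mathcal{I}),\qquad \sum_{i\in\mathcal{I}}m_i+\sum_{i\in\mathcal{I}}\mu(hi,n)+\mu(l,n)=1.\]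
   Context: This is the stationary version of the partially segmented over-the-counter market model: $\mu(z)$ is the proportion of investors in state $z\in E$, where $(l,n)$ denotes low liquidity-type investors owning no asset, $(hi,n)$ high-type investors owning no asset and seeking to buy asset $i$, and $(hi,o)$/$(li,o)$ high/low-type investors owning asset $i$. The time-dependent dynamics are $\dot\mu_t(hi,n)=-\lambda_i\mu_t(hi,n)\mu_t(li,o)+\widetilde{\gamma}_{ui}\mu_t(l,n)-\widetilde{\gamma}_{di}\mu_t(hi,n)$ and $\dot\mu_t(li,o)=-\lambda_i\mu_t(hi,n)\mu_t(li,o)-\gamma_{ui}\mu_t(li,o)+\gamma_{di}\mu_t(hi,o)$ under the stated constraints; a steady state is a solution with zero time derivative. *)

theory Defs
  imports "HOL-Analysis.Analysis" "HOL-Library.FuncSet"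
begin

text \<open>Investor states: LN = (l,n); HN i = (hi,n); HO i = (hi,o); LO i = (li,o).\<close>
datatype state = LN | HN nat | HO nat | LO nat

definition state_space :: "nat \<Rightarrow> state set" where
  "state_space K = {LN} \<union> HN ` {1..K} \<union> HO ` {1..K} \<union> LO ` {1..K}"

definition is_steady_state ::
  "nat \<Rightarrow> (nat \<Rightarrow> real) \<Rightarrow> (nat \<Rightarrow> real) \<Rightarrow> (nat \<Rightarrow> real) \<Rightarrow> (nat \<Rightarrow> real)
   \<Rightarrow> (nat \<Rightarrow> real) \<Rightarrow> (nat \<Rightarrow> real) \<Rightarrow> (state \<Rightarrow> real) \<Rightarrow> bool" where
  "is_steady_state K lam gu gd gtu gtd m \<mu> \<longleftrightarrow>
     (\<forall>i\<in>{1..K}.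
        0 = - lam i * \<mu> (HN i) * \<mu> (LO i) + gtu i * \<mu> LN - gtd i * \<mu> (HN i) \<and>
        0 = - lam i * \<mu> (HN i) * \<mu> (LO i) - gu i * \<mu> (LO i) + gd i * \<mu> (HO i) \<and>
        \<mu> (HO i) + \<mu> (LO i) = m i) \<and>
     (\<Sum>i\<in>{1..K}. m i) + (\<Sum>i\<in>{1..K}. \<mu> (HN i)) + \<mu> LN = 1"

end

theory Submission
  imports Defs "HOL-Library.Quadratic_Discriminant"
begin

text \<open>Fix the mass \<open>x = \<mu>(l,n)\<close>. Then the equations of asset \<open>i\<close> decouple: the second one and
the supply constraint determine \<open>\<mu>(li,o)\<close> as a decreasing function of \<open>h = \<mu>(hi,n)\<close>, and the
first one says that the outflow \<open>F\<^sub>i(h)\<close> of buyers of asset \<open>i\<close> equals their inflow, which is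
proportional to \<open>x\<close>. The outflow vanishes at \<open>0\<close> and is strictly increasing on \<open>[0,\<infinity>)\<close>;
clearing its denominator turns the balance into a quadratic equation in \<open>h\<close>, whose nonnegative
root \<open>h\<^sub>i(x)\<close> depends continuously and monotonically on \<open>x\<close>. Steady states thus correspond
exactly to the solutions \<open>x \<ge> 0\<close> of \<open>x + \<Sum>\<^sub>i h\<^sub>i(x) = 1 - \<Sum>\<^sub>i m\<^sub>i\<close>; the left-hand side is
continuous, strictly increasing, zero at \<open>0\<close> and at least \<open>x\<close>, so there is exactly one.\<close>

definition quadratic_pos_root :: "real \<Rightarrow> real \<Rightarrow> real \<Rightarrow> real" where
  "quadratic_pos_root a b c = (- b + sqrt (discrim a b c)) / (2 * a)"

lemma quadratic_pos_root:
  assumes "a > 0" "c \<le> 0"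
  shows "0 \<le> quadratic_pos_root a b c"
    and "a * (quadratic_pos_root a b c)\<^sup>2 + b * quadratic_pos_root a b c + c = 0"
proof -
  have "b\<^sup>2 \<le> discrim a b c"
    using assms by (simp add: discrim_def mult_nonneg_nonpos)
  then have "\<bar>b\<bar> \<le> sqrt (discrim a b c)"
    using real_sqrt_le_mono by fastforce
  then show "0 \<le> quadratic_pos_root a b c"
    using assms(1) by (simp add: quadratic_pos_root_def)
  have "0 \<le> discrim a b c"
    using \<open>b\<^sup>2 \<le> discrim a b c\<close> zero_le_power2 order_trans by blast
  then show "a * (quadratic_pos_root a b c)\<^sup>2 + b * quadratic_pos_root a b c + c = 0"
    using discriminant_nonneg[of a b c "quadratic_pos_root a b c"] assms(1)
    by (simp add: quadratic_pos_root_def)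
qed

lemma strict_mono_on_ex1_eq:
  fixes f :: "real \<Rightarrow> real"
  assumes "strict_mono_on {a..} f" "continuous_on {a..} f" "f a \<le> y" "a \<le> b" "y \<le> f b"
  shows "\<exists>!x. a \<le> x \<and> f x = y"
proof -
  have "continuous_on {a..b} f"
    using assms(2) by (rule continuous_on_subset) auto
  then obtain x where "a \<le> x" "f x = y"
    using IVT'[of f a y b] assms(3-5) by blast
  moreover have "x' = x" if "a \<le> x'" "f x' = y" for x'
    using strict_mono_on_eqD[OF assms(1)] \<open>a \<le> x\<close> \<open>f x = y\<close> that by fastforce
  ultimately show ?thesis
    by blast
qed

definition lo_mass :: "real \<Rightarrow> real \<Rightarrow> real \<Rightarrow> real \<Rightarrow> real \<Rightarrow> real" where
  "lo_mass lam gu gd m h = gd * m / (lam * h + (gu + gd))"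

definition buyer_outflow :: "real \<Rightarrow> real \<Rightarrow> real \<Rightarrow> real \<Rightarrow> real \<Rightarrow> real \<Rightarrow> real" where
  "buyer_outflow lam gu gd gtd m h = lam * h * lo_mass lam gu gd m h + gtd * h"

text \<open>The nonnegative root of \<open>buyer_outflow h = v\<close> with the denominator cleared.\<close>

definition buyer_mass :: "real \<Rightarrow> real \<Rightarrow> real \<Rightarrow> real \<Rightarrow> real \<Rightarrow> real \<Rightarrow> real" where
  "buyer_mass lam gu gd gtd m v =
     quadratic_pos_root (gtd * lam) (lam * gd * m + gtd * (gu + gd) - lam * v) (- v * (gu + gd))"

locale asset =
  fixes lam gu gd gtd m :: real
  assumes pos: "lam > 0" "gu > 0" "gd > 0" "gtd > 0" "m > 0"
begin

abbreviation "lo \<equiv> lo_mass lam gu gd m"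
abbreviation "outflow \<equiv> buyer_outflow lam gu gd gtd m"
abbreviation "mass \<equiv> buyer_mass lam gu gd gtd m"

lemma denominator_pos: "h \<ge> 0 \<Longrightarrow> lam * h + (gu + gd) > 0"
  using pos by (simp add: add_nonneg_pos)

lemma lo_mass_bounds:
  assumes "h \<ge> 0"
  shows "0 \<le> lo h" "lo h \<le> m"
proof -
  have "gd \<le> lam * h + (gu + gd)"
    using pos assms by simp
  then show "0 \<le> lo h" "lo h \<le> m"
    using pos denominator_pos[OF assms] by (simp_all add: lo_mass_def divide_simps)
qed

lemma asset_equations_iff:
  assumes "h \<ge> 0"
  shows "(0 = - lam * h * y + v - gtd * h \<and> 0 = - lam * h * y - gu * y + gd * z \<and> z + y = m)
     \<longleftrightarrow> (y = lo h \<and> z = m - y \<and> outflow h = v)"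
proof -
  have "y = lo h \<longleftrightarrow> 0 = - lam * h * y - gu * y + gd * (m - y)"
    using denominator_pos[OF assms] by (auto simp: lo_mass_def field_simps)
  then show ?thesis
    by (auto simp: buyer_outflow_def)
qed

lemma buyer_outflow_strict_mono: "strict_mono_on {0..} outflow"
proof (rule strict_mono_onI)
  fix h1 h2 :: real
  assume "h1 \<in> {0..}" "h2 \<in> {0..}" "h1 < h2"
  then have "0 \<le> h1" "h1 < h2" by auto
  then have "h1 * (gu + gd) \<le> h2 * (gu + gd)"
    using pos by (intro mult_right_mono) auto
  then have "h1 * (lam * h2 + (gu + gd)) \<le> h2 * (lam * h1 + (gu + gd))"
    by (simp add: algebra_simps)
  then have "h1 / (lam * h1 + (gu + gd)) \<le> h2 / (lam * h2 + (gu + gd))"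
    using denominator_pos \<open>0 \<le> h1\<close> \<open>h1 < h2\<close> by (simp add: divide_simps)
  then have "lam * gd * m * (h1 / (lam * h1 + (gu + gd))) \<le> lam * gd * m * (h2 / (lam * h2 + (gu + gd)))"
    using pos by (intro mult_left_mono) auto
  moreover have "gtd * h1 < gtd * h2"
    using pos \<open>h1 < h2\<close> by simp
  ultimately show "outflow h1 < outflow h2"
    by (simp add: buyer_outflow_def lo_mass_def mult_ac)
qed

lemma buyer_outflow_eq_iff_quadratic:
  assumes "h \<ge> 0"
  shows "outflow h = v \<longleftrightarrow>
    gtd * lam * h\<^sup>2 + (lam * gd * m + gtd * (gu + gd) - lam * v) * h + (- v * (gu + gd)) = 0"
proof -
  have "outflow h = v \<longleftrightarrow> lam * h * (gd * m) + gtd * h * (lam * h + (gu + gd)) = v * (lam * h + (gu + gd))"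
    using denominator_pos[OF assms] by (simp add: buyer_outflow_def lo_mass_def field_simps)
  also have "\<dots> \<longleftrightarrow> gtd * lam * h\<^sup>2 + (lam * gd * m + gtd * (gu + gd) - lam * v) * h + (- v * (gu + gd)) = 0"
    by (simp add: algebra_simps power2_eq_square)
  finally show ?thesis .
qed

lemma buyer_mass:
  assumes "v \<ge> 0"
  shows "0 \<le> mass v" "outflow (mass v) = v"
proof -
  have "gtd * lam > 0" "- v * (gu + gd) \<le> 0"
    using pos assms by simp_all
  from quadratic_pos_root[OF this] show "0 \<le> mass v" "outflow (mass v) = v"
    by (simp_all add: buyer_mass_def buyer_outflow_eq_iff_quadratic)
qed

lemma buyer_mass_eqI:
  assumes "h \<ge> 0" "outflow h = v"
  shows "mass v = h"
proof -
  have "0 \<le> v"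
    using strict_mono_on_leD[OF buyer_outflow_strict_mono, of 0 h] assms
    by (simp add: buyer_outflow_def)
  then have "outflow (mass v) = outflow h" "mass v \<in> {0..}"
    using buyer_mass assms by auto
  then show ?thesis
    using strict_mono_on_eqD[OF buyer_outflow_strict_mono] assms(1) by fastforce
qed

lemma buyer_mass_mono:
  assumes "0 \<le> v" "v \<le> w"
  shows "mass v \<le> mass w"
proof (rule ccontr)
  assume "\<not> mass v \<le> mass w"
  then have "outflow (mass w) < outflow (mass v)"
    using buyer_mass assms by (intro strict_mono_onD[OF buyer_outflow_strict_mono]) auto
  then show False
    using buyer_mass(2) assms by simp
qed

lemma continuous_on_buyer_mass: "continuous_on S mass"
  using pos unfolding buyer_mass_def quadratic_pos_root_def discrim_def
  by (intro continuous_intros) simp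

end

lemma in_state_space_iff [simp]:
  "LN \<in> state_space K"
  "HN i \<in> state_space K \<longleftrightarrow> i \<in> {1..K}"
  "HO i \<in> state_space K \<longleftrightarrow> i \<in> {1..K}"
  "LO i \<in> state_space K \<longleftrightarrow> i \<in> {1..K}"
  by (auto simp: state_space_def)

locale market =
  fixes K :: nat and lam gu gd gtu gtd m :: "nat \<Rightarrow> real"
  assumes rates_pos:
      "\<forall>i\<in>{1..K}. lam i > 0 \<and> gu i > 0 \<and> gd i > 0 \<and> gtu i > 0 \<and> gtd i > 0 \<and> m i > 0"
    and assets_less_1: "(\<Sum>i\<in>{1..K}. m i) < 1"
begin

lemma asset: "i \<in> {1..K} \<Longrightarrow> asset (lam i) (gu i) (gd i) (gtd i) (m i)"
  using rates_pos by (simp add: asset_def)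

definition mu_hn :: "nat \<Rightarrow> real \<Rightarrow> real" where
  "mu_hn i x = buyer_mass (lam i) (gu i) (gd i) (gtd i) (m i) (gtu i * x)"

definition mu_lo :: "nat \<Rightarrow> real \<Rightarrow> real" where
  "mu_lo i x = lo_mass (lam i) (gu i) (gd i) (m i) (mu_hn i x)"

definition total_mass :: "real \<Rightarrow> real" where
  "total_mass x = x + (\<Sum>i\<in>{1..K}. mu_hn i x)"

definition market_state :: "real \<Rightarrow> state \<Rightarrow> real" where
  "market_state x = restrict
     (\<lambda>s. case s of LN \<Rightarrow> x | HN i \<Rightarrow> mu_hn i x | LO i \<Rightarrow> mu_lo i x | HO i \<Rightarrow> m i - mu_lo i x)
     (state_space K)"

lemma gtu_pos: "i \<in> {1..K} \<Longrightarrow> gtu i > 0"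
  using rates_pos by simp

lemma mu_hn_nonneg:
  assumes "i \<in> {1..K}" "0 \<le> x"
  shows "0 \<le> mu_hn i x"
  using asset.buyer_mass(1)[OF asset[OF assms(1)], of "gtu i * x"] gtu_pos[OF assms(1)] assms(2)
  by (simp add: mu_hn_def)

lemma mu_hn_zero: "i \<in> {1..K} \<Longrightarrow> mu_hn i 0 = 0"
  using asset.buyer_mass_eqI[OF asset, of i 0 0] by (simp add: mu_hn_def buyer_outflow_def)

lemma total_mass_strict_mono: "strict_mono_on {0..} total_mass"
proof (rule strict_mono_onI)
  fix x y :: real
  assume "x \<in> {0..}" "y \<in> {0..}" "x < y"
  then have "mu_hn i x \<le> mu_hn i y" if "i \<in> {1..K}" for i
    using asset.buyer_mass_mono[OF asset[OF that]] gtu_pos[OF that] \<open>x \<in> {0..}\<close> \<open>x < y\<close>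
    by (simp add: mu_hn_def)
  then have "(\<Sum>i\<in>{1..K}. mu_hn i x) \<le> (\<Sum>i\<in>{1..K}. mu_hn i y)"
    by (rule sum_mono)
  with \<open>x < y\<close> show "total_mass x < total_mass y"
    by (simp add: total_mass_def)
qed

lemma continuous_on_total_mass: "continuous_on S total_mass"
proof -
  have "continuous_on S (\<lambda>x. mu_hn i x)" if "i \<in> {1..K}" for i
    unfolding mu_hn_def
    by (intro continuous_on_compose2[OF asset.continuous_on_buyer_mass[OF asset[OF that]]]
        continuous_intros) auto
  then show ?thesis
    unfolding total_mass_def by (intro continuous_intros) auto
qed

lemma ex1_total_mass_eq: "\<exists>!x. 0 \<le> x \<and> total_mass x = 1 - (\<Sum>i\<in>{1..K}. m i)"
proof (rule strict_mono_on_ex1_eq[OF total_mass_strict_mono continuous_on_total_mass])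
  show "total_mass 0 \<le> 1 - (\<Sum>i\<in>{1..K}. m i)"
    using assets_less_1 by (simp add: total_mass_def mu_hn_zero)
  show "0 \<le> 1 - (\<Sum>i\<in>{1..K}. m i)"
    using assets_less_1 by simp
  show "1 - (\<Sum>i\<in>{1..K}. m i) \<le> total_mass (1 - (\<Sum>i\<in>{1..K}. m i))"
    using assets_less_1 mu_hn_nonneg by (simp add: total_mass_def sum_nonneg del: atLeastAtMost_iff)
qed

lemma is_steady_state_iff:
  assumes "\<forall>i\<in>{1..K}. 0 \<le> \<mu> (HN i)"
  shows "is_steady_state K lam gu gd gtu gtd m \<mu> \<longleftrightarrow>
    (\<forall>i\<in>{1..K}. \<mu> (LO i) = lo_mass (lam i) (gu i) (gd i) (m i) (\<mu> (HN i))
        \<and> \<mu> (HO i) = m i - \<mu> (LO i)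
        \<and> buyer_outflow (lam i) (gu i) (gd i) (gtd i) (m i) (\<mu> (HN i)) = gtu i * \<mu> LN)
    \<and> (\<Sum>i\<in>{1..K}. m i) + (\<Sum>i\<in>{1..K}. \<mu> (HN i)) + \<mu> LN = 1"
  unfolding is_steady_state_def
  by (intro conj_cong[OF ball_cong[OF refl] refl] asset.asset_equations_iff[OF asset]) (use assms in auto)

lemma steady_state_eq_market_state:
  assumes "\<mu> \<in> extensional_funcset (state_space K) {0..}"
    and "is_steady_state K lam gu gd gtu gtd m \<mu>"
  shows "0 \<le> \<mu> LN" "total_mass (\<mu> LN) = 1 - (\<Sum>i\<in>{1..K}. m i)" "\<mu> = market_state (\<mu> LN)"
proof -
  have nonneg: "0 \<le> \<mu> s" if "s \<in> state_space K" for s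
    using PiE_mem[OF assms(1) that] by simp
  then have hn_nonneg: "\<forall>i\<in>{1..K}. 0 \<le> \<mu> (HN i)"
    by simp
  show "0 \<le> \<mu> LN"
    using nonneg by simp
  have reduced: "\<mu> (LO i) = lo_mass (lam i) (gu i) (gd i) (m i) (\<mu> (HN i))"
      "\<mu> (HO i) = m i - \<mu> (LO i)"
      "buyer_outflow (lam i) (gu i) (gd i) (gtd i) (m i) (\<mu> (HN i)) = gtu i * \<mu> LN"
    if "i \<in> {1..K}" for i
    using assms(2) that unfolding is_steady_state_iff[OF hn_nonneg] by blast+
  have hn: "\<mu> (HN i) = mu_hn i (\<mu> LN)" if "i \<in> {1..K}" for i
    using asset.buyer_mass_eqI[OF asset[OF that] _ reduced(3)[OF that]] hn_nonneg that
    by (simp add: mu_hn_def)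
  have lo_ho: "\<mu> (LO i) = mu_lo i (\<mu> LN)" "\<mu> (HO i) = m i - mu_lo i (\<mu> LN)"
    if "i \<in> {1..K}" for i
    using reduced[OF that] hn[OF that] by (simp_all add: mu_lo_def)
  have "(\<Sum>i\<in>{1..K}. \<mu> (HN i)) = (\<Sum>i\<in>{1..K}. mu_hn i (\<mu> LN))"
    using hn by (rule sum.cong[OF refl])
  then show "total_mass (\<mu> LN) = 1 - (\<Sum>i\<in>{1..K}. m i)"
    using assms(2) by (simp add: is_steady_state_def total_mass_def)
  show "\<mu> = market_state (\<mu> LN)"
  proof
    fix s
    show "\<mu> s = market_state (\<mu> LN) s"
    proof (cases "s \<in> state_space K")
      case True
      then show ?thesis
        using hn lo_ho by (cases s) (simp_all add: market_state_def)
    next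
      case False
      then show ?thesis
        using PiE_arb[OF assms(1) False] by (simp add: market_state_def)
    qed
  qed
qed

lemma market_state_steady:
  assumes "0 \<le> x" "total_mass x = 1 - (\<Sum>i\<in>{1..K}. m i)"
  shows "market_state x \<in> extensional_funcset (state_space K) {0..}"
    and "is_steady_state K lam gu gd gtu gtd m (market_state x)"
proof -
  have hn_nonneg: "\<forall>i\<in>{1..K}. 0 \<le> market_state x (HN i)"
    using mu_hn_nonneg assms(1) by (simp add: market_state_def)
  have lo_bounds: "0 \<le> mu_lo i x" "mu_lo i x \<le> m i" if "i \<in> {1..K}" for i
    using asset.lo_mass_bounds[OF asset[OF that] mu_hn_nonneg[OF that assms(1)]]
    by (simp_all add: mu_lo_def)
  show "market_state x \<in> extensional_funcset (state_space K) {0..}"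
    unfolding market_state_def restrict_PiE_iff
  proof
    fix s
    assume "s \<in> state_space K"
    then show "(case s of LN \<Rightarrow> x | HN i \<Rightarrow> mu_hn i x | LO i \<Rightarrow> mu_lo i x | HO i \<Rightarrow> m i - mu_lo i x) \<in> {0..}"
      using assms(1) mu_hn_nonneg lo_bounds by (cases s) simp_all
  qed
  have outflow: "buyer_outflow (lam i) (gu i) (gd i) (gtd i) (m i) (mu_hn i x) = gtu i * x"
    if "i \<in> {1..K}" for i
    using asset.buyer_mass(2)[OF asset[OF that]] gtu_pos[OF that] assms(1) by (simp add: mu_hn_def)
  have "(\<Sum>i\<in>{1..K}. market_state x (HN i)) = (\<Sum>i\<in>{1..K}. mu_hn i x)"
    by (rule sum.cong) (simp_all add: market_state_def)
  then show "is_steady_state K lam gu gd gtu gtd m (market_state x)"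
    unfolding is_steady_state_iff[OF hn_nonneg]
    using outflow assms(2) by (simp add: market_state_def mu_lo_def total_mass_def)
qed

theorem ex1_steady_state:
  "\<exists>!\<mu>. \<mu> \<in> extensional_funcset (state_space K) {0..} \<and> is_steady_state K lam gu gd gtu gtd m \<mu>"
proof -
  obtain x where x: "0 \<le> x" "total_mass x = 1 - (\<Sum>i\<in>{1..K}. m i)"
    using ex1_total_mass_eq by blast
  show ?thesis
  proof (rule ex1I)
    show "market_state x \<in> extensional_funcset (state_space K) {0..}
        \<and> is_steady_state K lam gu gd gtu gtd m (market_state x)"
      using market_state_steady[OF x] by blast
  next
    fix \<mu>
    assume "\<mu> \<in> extensional_funcset (state_space K) {0..} \<and> is_steady_state K lam gu gd gtu gtd m \<mu>"
    then have "0 \<le> \<mu> LN" "total_mass (\<mu> LN) = 1 - (\<Sum>i\<in>{1..K}. m i)" "\<mu> = market_state (\<mu> LN)"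
      using steady_state_eq_market_state by blast+
    then show "\<mu> = market_state x"
      using ex1_total_mass_eq x by metis
  qed
qed

end

theorem proposition2:
  fixes K :: nat
    and lam gu gd gtu gtd m :: "nat \<Rightarrow> real"
  assumes "K \<ge> 1"
    and "\<forall>i\<in>{1..K}. lam i > 0 \<and> gu i > 0 \<and> gd i > 0 \<and> gtu i > 0 \<and> gtd i > 0 \<and> m i > 0"
    and "(\<Sum>i\<in>{1..K}. m i) < 1"
  shows "\<exists>!\<mu>. \<mu> \<in> extensional_funcset (state_space K) {0..} \<and>
               is_steady_state K lam gu gd gtu gtd m \<mu>"
proof -
  interpret market K lam gu gd gtu gtd m
    using assms(2,3) by unfold_locales
  show ?thesis
    by (rule ex1_steady_state)
qed

end
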